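(* Let $G=(V,E)$ be a connected cograph with at least two vertices. Then $|\mathrm{core}(G)|\le 1$, and if $\mathrm{core}(G)=\{w\}$ then $\gamma(G-w)>\gamma(G)$ (i.e. $\mathrm{core}(G)\subseteq V^+$).
   Context: All graphs are finite, simple and undirected. A cograph is a graph with no induced path on four vertices ($P_4$-free graph). $\gamma(G)$ is the domination number; a minimum dominating set (mds) is a dominating set of size $\gamma(G)$; $\mathrm{core}(G)$ is the set of vertices in every mds. $G-w$ is $G$ with $w$ deleted and $V^+=\{v:\gamma(G-v)>\gamma(G)\}$. *)

theory Defs
  imports Main
begin

definition graph :: "'a set \<Rightarrow> ('a \<Rightarrow> 'a \<Rightarrow> bool) \<Rightarrow> bool" where
  "graph V E \<longleftrightarrow> finite V \<and> (\<forall>u v. E u v \<longrightarrow> u \<in> V \<and> v \<in> V) \<and>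
     (\<forall>u v. E u v \<longrightarrow> E v u) \<and> (\<forall>v. \<not> E v v)"

inductive reachable :: "'a set \<Rightarrow> ('a \<Rightarrow> 'a \<Rightarrow> bool) \<Rightarrow> 'a \<Rightarrow> 'a \<Rightarrow> bool"
  for V E where
  refl: "v \<in> V \<Longrightarrow> reachable V E v v"
| step: "reachable V E u v \<Longrightarrow> E v w \<Longrightarrow> w \<in> V \<Longrightarrow> reachable V E u w"

definition connected_graph :: "'a set \<Rightarrow> ('a \<Rightarrow> 'a \<Rightarrow> bool) \<Rightarrow> bool" where
  "connected_graph V E \<longleftrightarrow> V \<noteq> {} \<and> (\<forall>u\<in>V. \<forall>v\<in>V. reachable V E u v)"

definition induced_P4 :: "'a set \<Rightarrow> ('a \<Rightarrow> 'a \<Rightarrow> bool) \<Rightarrow> 'a \<Rightarrow> 'a \<Rightarrow> 'a \<Rightarrow> 'a \<Rightarrow> bool" where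
  "induced_P4 V E a b c d \<longleftrightarrow> a \<in> V \<and> b \<in> V \<and> c \<in> V \<and> d \<in> V \<and>
     distinct [a, b, c, d] \<and> E a b \<and> E b c \<and> E c d \<and> \<not> E a c \<and> \<not> E a d \<and> \<not> E b d"

definition cograph :: "'a set \<Rightarrow> ('a \<Rightarrow> 'a \<Rightarrow> bool) \<Rightarrow> bool" where
  "cograph V E \<longleftrightarrow> graph V E \<and> \<not> (\<exists>a b c d. induced_P4 V E a b c d)"

definition dominating_set :: "'a set \<Rightarrow> ('a \<Rightarrow> 'a \<Rightarrow> bool) \<Rightarrow> 'a set \<Rightarrow> bool" where
  "dominating_set V E D \<longleftrightarrow> D \<subseteq> V \<and> (\<forall>v\<in>V. v \<in> D \<or> (\<exists>u\<in>D. E u v))"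

definition domination_number :: "'a set \<Rightarrow> ('a \<Rightarrow> 'a \<Rightarrow> bool) \<Rightarrow> nat" where
  "domination_number V E = (LEAST k. \<exists>D. dominating_set V E D \<and> card D = k)"

definition min_dominating_set :: "'a set \<Rightarrow> ('a \<Rightarrow> 'a \<Rightarrow> bool) \<Rightarrow> 'a set \<Rightarrow> bool" where
  "min_dominating_set V E D \<longleftrightarrow> dominating_set V E D \<and> card D = domination_number V E"

definition core :: "'a set \<Rightarrow> ('a \<Rightarrow> 'a \<Rightarrow> bool) \<Rightarrow> 'a set" where
  "core V E = {v \<in> V. \<forall>D. min_dominating_set V E D \<longrightarrow> v \<in> D}"

definition del_vertex_V :: "'a set \<Rightarrow> 'a \<Rightarrow> 'a set" where
  "del_vertex_V V w = V - {w}"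

definition del_vertex_E :: "('a \<Rightarrow> 'a \<Rightarrow> bool) \<Rightarrow> 'a \<Rightarrow> 'a \<Rightarrow> 'a \<Rightarrow> bool" where
  "del_vertex_E E w = (\<lambda>u v. E u v \<and> u \<noteq> w \<and> v \<noteq> w)"

definition V_plus :: "'a set \<Rightarrow> ('a \<Rightarrow> 'a \<Rightarrow> bool) \<Rightarrow> 'a set" where
  "V_plus V E = {v \<in> V. domination_number (del_vertex_V V v) (del_vertex_E E v) > domination_number V E}"

end

theory Submission
  imports Defs
begin

text \<open>
  A connected cograph on at least two vertices has a disconnected complement (Seinsche): if
  G and its complement are both connected, deleting a vertex x keeps G connected, since
  otherwise a non-neighbour of x and a neighbour of x in another component of G - x yield an
  induced P4 through x; induction on the number of vertices, applied to G or to its complement,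
  gives the claim. So G is the join of two nonempty vertex sets A and B. If G has a universal
  vertex u, then \<open>\<gamma>(G) = 1\<close> and the core lies in {u}; were \<open>\<gamma>(G - u) = 1\<close>, a universal
  vertex of G - u would be universal in G, and u would miss a minimum dominating set.
  Otherwise \<open>\<gamma>(G) = 2\<close>, and every vertex w is avoided by a minimum dominating set {a, b}
  with a a non-neighbour of w (on the side of w) and b on the other side, so the core is empty.
\<close>

definition graph_complement :: "'a set \<Rightarrow> ('a \<Rightarrow> 'a \<Rightarrow> bool) \<Rightarrow> 'a \<Rightarrow> 'a \<Rightarrow> bool" where
  "graph_complement V E u v \<longleftrightarrow> u \<in> V \<and> v \<in> V \<and> u \<noteq> v \<and> \<not> E u v"

definition universal_vertex :: "'a set \<Rightarrow> ('a \<Rightarrow> 'a \<Rightarrow> bool) \<Rightarrow> 'a \<Rightarrow> bool" where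
  "universal_vertex V E u \<longleftrightarrow> u \<in> V \<and> (\<forall>v\<in>V. v \<noteq> u \<longrightarrow> E u v)"

lemma reachable_mem: "reachable V E u v \<Longrightarrow> u \<in> V \<and> v \<in> V"
  by (induction rule: reachable.induct) auto

lemma reachable_trans:
  assumes "reachable V E u v" "reachable V E v w"
  shows "reachable V E u w"
  using assms(2,1) by (induction rule: reachable.induct) (auto intro: reachable.step)

lemma reachable_edge: "u \<in> V \<Longrightarrow> E u w \<Longrightarrow> w \<in> V \<Longrightarrow> reachable V E u w"
  by (meson reachable.refl reachable.step)

lemma reachable_sym:
  assumes sym: "\<And>u v. E u v \<Longrightarrow> E v u" and "reachable V E u v"
  shows "reachable V E v u"
  using assms(2)
proof (induction rule: reachable.induct)
  case (refl v)
  then show ?case by (rule reachable.refl)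
next
  case (step u v w)
  then have "reachable V E w v"
    using sym reachable_mem[OF step.hyps(1)] by (blast intro: reachable_edge)
  then show ?case using step.IH by (rule reachable_trans)
qed

lemma reachable_last_edge: "reachable V E u w \<Longrightarrow> u \<noteq> w \<Longrightarrow> \<exists>v\<in>V. E v w"
  by (erule reachable.cases) (auto dest: reachable_mem)

lemma reachable_crossing_edge:
  assumes "reachable V E y z" "\<not> P y" "P z"
  shows "\<exists>a b. reachable V E y a \<and> E a b \<and> b \<in> V \<and> \<not> P a \<and> P b"
  using assms
proof (induction rule: reachable.induct)
  case (refl v)
  then show ?case by blast
next
  case (step u v w)
  then show ?case by (cases "P v") auto
qed

lemma reachable_delete_vertex:
  assumes "reachable V E u w" "u \<noteq> x"
  shows "reachable (V - {x}) (del_vertex_E E x) u w \<or>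
         (\<exists>z. E z x \<and> reachable (V - {x}) (del_vertex_E E x) u z)"
  using assms
proof (induction rule: reachable.induct)
  case (refl v)
  then show ?case by (auto intro: reachable.refl)
next
  case (step u v w)
  show ?case
  proof (cases "\<exists>z. E z x \<and> reachable (V - {x}) (del_vertex_E E x) u z")
    case False
    with step have uv: "reachable (V - {x}) (del_vertex_E E x) u v" by blast
    then have "v \<noteq> x" using reachable_mem by fastforce
    show ?thesis
    proof (cases "w = x")
      case True
      then show ?thesis using uv step by blast
    next
      case False
      then show ?thesis
        using uv step \<open>v \<noteq> x\<close> by (auto intro: reachable.step simp: del_vertex_E_def)
    qed
  qed blast
qed

lemma reachable_neighbour_in_delete_vertex:
  assumes "reachable V E u x" "u \<noteq> x"
  obtains z where "E z x" "reachable (V - {x}) (del_vertex_E E x) u z"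
  using reachable_delete_vertex[OF assms] reachable_mem[of "V - {x}" _ u x] that by blast

lemma not_connected_graph_unreachable:
  assumes sym: "\<And>u v. E u v \<Longrightarrow> E v u" and "\<not> connected_graph V E" "y \<in> V"
  obtains r where "r \<in> V" "\<not> reachable V E y r"
proof -
  have "V \<noteq> {}" using assms(3) by blast
  then obtain p q where pq: "p \<in> V" "q \<in> V" "\<not> reachable V E p q"
    using assms(2) unfolding connected_graph_def by blast
  have "\<not> reachable V E y p \<or> \<not> reachable V E y q"
    using pq reachable_sym[of E V y p, OF sym] reachable_trans[of V E p y q] by blast
  then show ?thesis using that pq by blast
qed

lemma connected_graph_pair:
  assumes "connected_graph {p, q} E" "p \<noteq> q" "\<And>v. \<not> E v v"
  shows "E p q"
proof -
  have "reachable {p, q} E p q" using assms(1) by (simp add: connected_graph_def)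
  then obtain v where "v \<in> {p, q}" "E v q" using reachable_last_edge[OF _ assms(2)] by blast
  then show ?thesis using assms(3) by (metis insert_iff singletonD)
qed

lemma graph_complement_complement: "graph V E \<Longrightarrow> graph_complement V (graph_complement V E) = E"
  unfolding graph_def graph_complement_def by (intro ext) auto

lemma graph_complement_delete_vertex:
  "graph_complement (V - {x}) (del_vertex_E E x) = del_vertex_E (graph_complement V E) x"
  unfolding graph_complement_def del_vertex_E_def by (intro ext) auto

lemma cograph_complement:
  assumes "cograph V E"
  shows "cograph V (graph_complement V E)"
  unfolding cograph_def
proof
  show "graph V (graph_complement V E)"
    using assms unfolding cograph_def graph_def graph_complement_def by auto
  show "\<nexists>a b c d. induced_P4 V (graph_complement V E) a b c d"
  proof
    assume "\<exists>a b c d. induced_P4 V (graph_complement V E) a b c d"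
    then obtain a b c d where "induced_P4 V (graph_complement V E) a b c d" by blast
    \<comment> \<open>The complement of a P4 is again a P4, traversed as c a d b.\<close>
    then have "induced_P4 V E c a d b"
      using assms unfolding induced_P4_def graph_complement_def cograph_def graph_def by auto
    with assms show False by (auto simp: cograph_def)
  qed
qed

lemma cograph_delete_vertex:
  assumes "cograph V E"
  shows "cograph (V - {x}) (del_vertex_E E x)"
  unfolding cograph_def
proof
  show "graph (V - {x}) (del_vertex_E E x)"
    using assms unfolding cograph_def graph_def del_vertex_E_def by auto
  show "\<nexists>a b c d. induced_P4 (V - {x}) (del_vertex_E E x) a b c d"
  proof
    assume "\<exists>a b c d. induced_P4 (V - {x}) (del_vertex_E E x) a b c d"
    then obtain a b c d where "induced_P4 (V - {x}) (del_vertex_E E x) a b c d" by blast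
    then have "induced_P4 V E a b c d" unfolding induced_P4_def del_vertex_E_def by auto
    with assms show False by (auto simp: cograph_def)
  qed
qed

lemma cograph_delete_vertex_connected:
  assumes cg: "cograph V E" and conn: "connected_graph V E"
    and conn_compl: "connected_graph V (graph_complement V E)"
    and x: "x \<in> V" and ne: "V - {x} \<noteq> {}"
  shows "connected_graph (V - {x}) (del_vertex_E E x)"
proof (rule ccontr)
  let ?V = "V - {x}" and ?E = "del_vertex_E E x"
  assume disc: "\<not> connected_graph ?V ?E"
  have sym: "E u v \<Longrightarrow> E v u" and irrefl: "\<not> E v v" for u v
    using cg by (simp_all add: cograph_def graph_def)
  have sym': "?E u v \<Longrightarrow> ?E v u" for u v
    using sym[of u v] by (auto simp: del_vertex_E_def)
  obtain p where p: "p \<in> ?V" using ne by blast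
  have "reachable V (graph_complement V E) p x"
    using conn_compl p x unfolding connected_graph_def by blast
  then obtain y where "graph_complement V E y x"
    using reachable_last_edge[of V _ p x] p by auto
  then have y: "y \<in> ?V" "\<not> E y x" by (auto simp: graph_complement_def)
  obtain r where r: "r \<in> ?V" "\<not> reachable ?V ?E y r"
    using not_connected_graph_unreachable[OF sym' disc y(1)] by blast
  have "reachable V E y x" "reachable V E r x"
    using conn x y r unfolding connected_graph_def by auto
  moreover have "y \<noteq> x" "r \<noteq> x" using y(1) r(1) by auto
  ultimately obtain z1 z2 where z1: "E z1 x" "reachable ?V ?E y z1"
    and z2: "E z2 x" "reachable ?V ?E r z2"
    using reachable_neighbour_in_delete_vertex[of V E y x]
      reachable_neighbour_in_delete_vertex[of V E r x] by metis
  \<comment> \<open>On a path from y to a neighbour of x, the first neighbour b of x is reached from a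
      non-neighbour a; the neighbour z2 lies in another component, so a b x z2 is an induced P4.\<close>
  obtain a b where ab: "reachable ?V ?E y a" "?E a b" "b \<in> ?V" "\<not> E a x" "E b x"
    using reachable_crossing_edge[of ?V ?E y z1 "\<lambda>v. E v x"] z1 y(2) by blast
  have yb: "reachable ?V ?E y b" using ab(1-3) by (rule reachable.step)
  have z2_far: "\<not> reachable ?V ?E y z2"
    using r(2) reachable_trans[OF _ reachable_sym[of ?E, OF sym' z2(2)]] by blast
  have aV: "a \<in> ?V" and z2V: "z2 \<in> ?V"
    using reachable_mem[OF ab(1)] reachable_mem[OF z2(2)] by auto
  have "\<not> ?E a z2" using z2_far reachable.step[OF ab(1) _ z2V] by blast
  moreover have "\<not> ?E b z2" using z2_far reachable.step[OF yb _ z2V] by blast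
  moreover have "b \<noteq> z2" using yb z2_far by blast
  moreover have "a \<noteq> z2" using ab(4) z2(1) by blast
  ultimately have "induced_P4 V E a b x z2"
    using aV ab(2,3,4,5) z2V sym[OF z2(1)] irrefl[of a] x
    unfolding induced_P4_def del_vertex_E_def by auto
  with cg show False by (auto simp: cograph_def)
qed

lemma cograph_connected_imp_complement_not_connected:
  assumes "cograph V E" "connected_graph V E" "card V \<ge> 2"
  shows "\<not> connected_graph V (graph_complement V E)"
  using assms
proof (induction "card V" arbitrary: V E rule: less_induct)
  case less
  have g: "graph V E" using less.prems(1) by (simp add: cograph_def)
  show ?case
  proof
    assume conn_compl: "connected_graph V (graph_complement V E)"
    show False
    proof (cases "card V = 2")
      case True
      then obtain p q where V: "V = {p, q}" "p \<noteq> q" by (meson card_2_iff)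
      have "\<not> E v v" for v using g by (simp add: graph_def)
      then have "E p q" using connected_graph_pair less.prems(2) V by metis
      moreover have "graph_complement V E p q"
        using connected_graph_pair conn_compl V by (metis graph_complement_def)
      ultimately show False by (simp add: graph_complement_def)
    next
      case False
      obtain x where x: "x \<in> V" using less.prems(3) by fastforce
      have fin: "finite V" using g by (simp add: graph_def)
      have card_del: "card (V - {x}) < card V" "2 \<le> card (V - {x})"
        using x fin False less.prems(3) by auto
      then have ne: "V - {x} \<noteq> {}" by (metis card.empty not_numeral_le_zero)
      have conn_del: "connected_graph (V - {x}) (del_vertex_E E x)"
        using cograph_delete_vertex_connected[OF less.prems(1,2) conn_compl x ne] .
      \<comment> \<open>By induction the complement of G - x is disconnected; it is the complement of G
          minus x, so the same argument applied to the complement of G yields a contradiction.\<close>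
      have "\<not> connected_graph (V - {x}) (del_vertex_E (graph_complement V E) x)"
        using less.hyps[OF card_del(1) cograph_delete_vertex[OF less.prems(1)] conn_del
            card_del(2)] by (simp add: graph_complement_delete_vertex)
      moreover have "connected_graph V (graph_complement V (graph_complement V E))"
        using less.prems(2) graph_complement_complement[OF g] by simp
      ultimately show False
        using cograph_delete_vertex_connected[OF cograph_complement[OF less.prems(1)] conn_compl
            _ x ne] by blast
    qed
  qed
qed

lemma connected_cograph_join:
  assumes "cograph V E" "connected_graph V E" "card V \<ge> 2"
  obtains A B where "A \<union> B = V" "A \<inter> B = {}" "A \<noteq> {}" "B \<noteq> {}" "\<forall>a\<in>A. \<forall>b\<in>B. E a b"
proof -
  let ?H = "graph_complement V E"
  have "V \<noteq> {}" using assms(2) by (simp add: connected_graph_def)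
  then obtain p q where pq: "p \<in> V" "q \<in> V" "\<not> reachable V ?H p q"
    using cograph_connected_imp_complement_not_connected[OF assms]
    unfolding connected_graph_def by blast
  define A where "A = {u. reachable V ?H p u}"
  have "A \<subseteq> V" using reachable_mem by (fastforce simp: A_def)
  have "E a b" if a: "a \<in> A" and b: "b \<in> V - A" for a b
  proof (rule ccontr)
    assume "\<not> E a b"
    then have "?H a b" using a b \<open>A \<subseteq> V\<close> by (auto simp: graph_complement_def)
    then have "b \<in> A" using a b by (auto simp: A_def intro: reachable.step)
    with b show False by blast
  qed
  moreover have "p \<in> A" using pq by (auto simp: A_def intro: reachable.refl)
  moreover have "q \<in> V - A" using pq by (auto simp: A_def)
  ultimately show thesis using that[of A "V - A"] \<open>A \<subseteq> V\<close> by blast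
qed

lemma domination_number_le: "dominating_set V E D \<Longrightarrow> domination_number V E \<le> card D"
  unfolding domination_number_def by (rule Least_le) blast

lemma min_dominating_set_exists: "\<exists>D. min_dominating_set V E D"
  unfolding min_dominating_set_def domination_number_def
  by (rule LeastI_ex) (auto simp: dominating_set_def)

lemma domination_number_pos:
  assumes "finite V" "V \<noteq> {}"
  shows "0 < domination_number V E"
proof -
  obtain D where D: "dominating_set V E D" "card D = domination_number V E"
    using min_dominating_set_exists unfolding min_dominating_set_def by blast
  then have "D \<noteq> {}" "finite D"
    using assms finite_subset unfolding dominating_set_def by blast+
  with D(2) show ?thesis by auto
qed

lemma dominating_set_singleton_iff: "dominating_set V E {u} \<longleftrightarrow> universal_vertex V E u"
  unfolding dominating_set_def universal_vertex_def by auto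

lemma domination_number_eq_1_iff:
  assumes "finite V" "V \<noteq> {}"
  shows "domination_number V E = 1 \<longleftrightarrow> (\<exists>u. universal_vertex V E u)"
proof
  assume "domination_number V E = 1"
  then obtain D where "dominating_set V E D" "card D = 1"
    using min_dominating_set_exists unfolding min_dominating_set_def by metis
  then show "\<exists>u. universal_vertex V E u"
    by (metis card_1_singletonE dominating_set_singleton_iff)
next
  assume "\<exists>u. universal_vertex V E u"
  then show "domination_number V E = 1"
    using domination_number_le[of V E "{_}"] domination_number_pos[OF assms, of E]
    by (fastforce simp: dominating_set_singleton_iff)
qed

lemma min_dominating_set_universal:
  assumes "finite V" "universal_vertex V E u"
  shows "min_dominating_set V E {u}"
proof -
  have "V \<noteq> {}" using assms(2) by (auto simp: universal_vertex_def)
  then have "domination_number V E = 1"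
    using domination_number_eq_1_iff[OF assms(1)] assms(2) by blast
  then show ?thesis
    using assms(2) by (simp add: min_dominating_set_def dominating_set_singleton_iff)
qed

lemma domination_number_delete_universal_core_vertex:
  assumes g: "graph V E" and "card V \<ge> 2"
    and u: "universal_vertex V E u" and core: "u \<in> core V E"
  shows "domination_number V E < domination_number (V - {u}) (del_vertex_E E u)"
proof (rule ccontr)
  let ?V = "V - {u}" and ?E = "del_vertex_E E u"
  assume "\<not> ?thesis"
  have fin: "finite V" using g by (simp add: graph_def)
  have "card ?V \<ge> 1" using assms(2) u fin by (simp add: universal_vertex_def)
  then have ne: "?V \<noteq> {}" by (metis card.empty not_one_le_zero)
  have "domination_number V E = 1"
    using domination_number_eq_1_iff[OF fin] u by (auto simp: universal_vertex_def)
  \<comment> \<open>G - u then has a universal vertex as well, which gives a second minimum dominating set of G.\<close>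
  with \<open>\<not> ?thesis\<close> have "domination_number ?V ?E = 1"
    using domination_number_pos[of ?V ?E] fin ne by simp
  then obtain v where v: "universal_vertex ?V ?E v"
    using domination_number_eq_1_iff[of ?V ?E] fin ne by auto
  then have "E v u" using g u by (auto simp: universal_vertex_def graph_def)
  with v have "universal_vertex V E v"
    by (auto simp: universal_vertex_def del_vertex_E_def)
  then have "u \<in> {v}"
    using core min_dominating_set_universal[OF fin] by (auto simp: core_def)
  with v show False by (simp add: universal_vertex_def)
qed

lemma join_side_not_in_core:
  assumes g: "graph V E" and AB: "A \<union> B = V" "A \<inter> B = {}" "B \<noteq> {}"
    and join: "\<forall>a\<in>A. \<forall>b\<in>B. E a b" and no_univ: "\<nexists>u. universal_vertex V E u"
    and w: "w \<in> A"
  shows "w \<notin> core V E"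
proof -
  have fin: "finite V" and sym: "\<And>u v. E u v \<Longrightarrow> E v u"
    using g by (auto simp: graph_def)
  have dom: "dominating_set V E {a, b}" if "a \<in> A" "b \<in> B" for a b
    using that AB join sym[of _ b] unfolding dominating_set_def by blast
  obtain a where a: "a \<in> V" "a \<noteq> w" "\<not> E w a"
    using no_univ w AB(1) by (auto simp: universal_vertex_def)
  then have "a \<in> A" using w join AB(1) by blast
  obtain b where b: "b \<in> B" using AB(3) by blast
  have "a \<noteq> b" using \<open>a \<in> A\<close> b AB(2) by blast
  then have card_ab: "card {a, b} = 2" by simp
  have "V \<noteq> {}" using w AB(1) by blast
  then have "domination_number V E \<noteq> 1" "0 < domination_number V E"
    using domination_number_eq_1_iff[OF fin] domination_number_pos[OF fin] no_univ by auto
  moreover have "domination_number V E \<le> 2"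
    using domination_number_le[OF dom[OF \<open>a \<in> A\<close> b]] card_ab by simp
  ultimately have "min_dominating_set V E {a, b}"
    using dom[OF \<open>a \<in> A\<close> b] card_ab by (simp add: min_dominating_set_def)
  moreover have "w \<notin> {a, b}" using a(2) w b AB(2) by blast
  ultimately show ?thesis by (auto simp: core_def)
qed

theorem proposition3:
  fixes V :: "'a set" and E :: "'a \<Rightarrow> 'a \<Rightarrow> bool"
  assumes "cograph V E" and "connected_graph V E" and "card V \<ge> 2"
  shows "card (core V E) \<le> 1 \<and>
         (\<forall>w. core V E = {w} \<longrightarrow>
            domination_number (del_vertex_V V w) (del_vertex_E E w) > domination_number V E)"
proof (cases "\<exists>u. universal_vertex V E u")
  case True
  then obtain u where u: "universal_vertex V E u" by blast
  have g: "graph V E" using assms(1) by (simp add: cograph_def)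
  then have "min_dominating_set V E {u}"
    using min_dominating_set_universal[OF _ u] by (simp add: graph_def)
  then have "core V E \<subseteq> {u}" by (auto simp: core_def)
  moreover have "domination_number V E < domination_number (V - {w}) (del_vertex_E E w)"
    if "core V E = {w}" for w
    using domination_number_delete_universal_core_vertex[OF g assms(3) u] that
      \<open>core V E \<subseteq> {u}\<close> by auto
  moreover have "card (core V E) \<le> 1"
    using card_mono[OF _ \<open>core V E \<subseteq> {u}\<close>] by simp
  ultimately show ?thesis by (simp add: del_vertex_V_def)
next
  case False
  have g: "graph V E" and sym: "\<And>u v. E u v \<Longrightarrow> E v u"
    using assms(1) by (auto simp: cograph_def graph_def)
  obtain A B where AB: "A \<union> B = V" "A \<inter> B = {}" "A \<noteq> {}" "B \<noteq> {}"
    and join: "\<forall>a\<in>A. \<forall>b\<in>B. E a b"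
    using connected_cograph_join[OF assms] by blast
  have "core V E = {}"
  proof -
    have "w \<notin> core V E" if "w \<in> A" for w
      using join_side_not_in_core[OF g AB(1,2,4) join False that] .
    moreover have "w \<notin> core V E" if "w \<in> B" for w
    proof -
      have "\<forall>b\<in>B. \<forall>a\<in>A. E b a" using join sym by blast
      then show ?thesis
        using join_side_not_in_core[of V E B A] g AB False that
        by (simp add: Un_commute Int_commute)
    qed
    moreover have "core V E \<subseteq> V" by (auto simp: core_def)
    ultimately show ?thesis using AB(1) by blast
  qed
  then show ?thesis by simp
qed

end
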